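(* Let $p$ be a prime and $f:\mathbb{Z}_p\times\mathbb{Z}_p\to\mathbb{Z}_p$. (i) If $f$ is additively separable, then the functional box $P^f$ is local. (ii) If $f$ is additively inseparable, then $P^f\leftrightarrow PR_p$, i.e. $P^f\to PR_p$ and $PR_p\to P^f$.
   Context: Let $p$ be a prime. All arithmetic on elements of $\mathbb{Z}_p$ is modulo $p$. A box is a conditional probability distribution $P(a,b\mid x,y)$ with $a,b,x,y\in\mathbb{Z}_p$. It is shared by Alice, who supplies $x$ and receives $a$, and Bob, who supplies $y$ and receives $b$. Different copies of a box act independently. For $j\in\mathbb{Z}_p$, the box $PR_{p,j}$ is defined by $PR_{p,j}(a,b\mid x,y)=1/p$ if $a-b=xy-j$, and $0$ otherwise. We write $PR_p:=PR_{p,0}$. For $f:\mathbb{Z}_p\times\mathbb{Z}_p\to\mathbb{Z}_p$, the functional box is defined by $P^f(a,b\mid x,y)=1/p$ if $a-b=f(x,y)$, and $0$ otherwise. A function $f$ is additively separable if there exist $g,h:\mathbb{Z}_p\to\mathbb{Z}_p$ with $f(x,y)=g(x)+h(y)$ for all $x,y$. Otherwise $f$ is additively inseparable. A box is local if Alice and Bob can reproduce its distribution exactly using only shared randomness and local processing, without communication. $P_1\to P_2$ means the following. For some $N\ge1$, Alice and Bob, using shared randomness, $N$ copies of $P_1$, and local processing but no communication, can exactly produce outputs distributed as $P_2(a,b\mid x,y)$ for every input pair $(x,y)$. Here each party's inputs to the boxes may depend on their own input, the shared randomness, and their own previously obtained box outputs. $P_1\leftrightarrow P_2$ means $P_1\to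 P_2$ and $P_2\to P_1$. *)

theory Defs
  imports "HOL-Probability.Probability"
begin

text \<open>Elements of Z_p are represented by naturals in {0..<p}; arithmetic is modulo p.
A box is a function P a b x y (probability of outputs a,b given inputs x,y).\<close>

type_synonym box = "nat \<Rightarrow> nat \<Rightarrow> nat \<Rightarrow> nat \<Rightarrow> real"

definition PR_box :: "nat \<Rightarrow> nat \<Rightarrow> box" where
  "PR_box p j a b x y =
     (if (int a - int b) mod int p = (int x * int y - int j) mod int p then 1 / real p else 0)"

abbreviation PR :: "nat \<Rightarrow> box" where
  "PR p \<equiv> PR_box p 0"

definition functional_box :: "nat \<Rightarrow> (nat \<Rightarrow> nat \<Rightarrow> nat) \<Rightarrow> box" where
  "functional_box p f a b x y =
     (if (int a - int b) mod int p = int (f x y) mod int p then 1 / real p else 0)"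

definition add_separable :: "nat \<Rightarrow> (nat \<Rightarrow> nat \<Rightarrow> nat) \<Rightarrow> bool" where
  "add_separable p f \<longleftrightarrow>
     (\<exists>g h :: nat \<Rightarrow> nat. \<forall>x<p. \<forall>y<p. int (f x y) mod int p = (int (g x) + int (h y)) mod int p)"

text \<open>Local box: reproducible from shared randomness (a discrete distribution mu)
and deterministic local processing (private randomness is absorbed into mu).\<close>

definition local_box :: "nat \<Rightarrow> box \<Rightarrow> bool" where
  "local_box p P \<longleftrightarrow>
     (\<exists>(mu :: nat pmf) (A :: nat \<Rightarrow> nat \<Rightarrow> nat) (B :: nat \<Rightarrow> nat \<Rightarrow> nat).
        (\<forall>l x. x < p \<longrightarrow> A l x < p) \<and> (\<forall>l y. y < p \<longrightarrow> B l y < p) \<and>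
        (\<forall>a<p. \<forall>b<p. \<forall>x<p. \<forall>y<p.
            P a b x y = measure_pmf.prob mu {l. A l x = a \<and> B l y = b}))"

definition zp_lists :: "nat \<Rightarrow> nat \<Rightarrow> nat list set" where
  "zp_lists p N = {xs. length xs = N \<and> set xs \<subseteq> {0..<p}}"

text \<open>Alice feeds the k-th copy with
ain l x (outputs of copies 0..k-1), Bob likewise; final outputs are aout/bout.\<close>

definition wiring_prob ::
  "box \<Rightarrow> nat \<Rightarrow> nat \<Rightarrow>
   (nat \<Rightarrow> nat \<Rightarrow> nat list \<Rightarrow> nat) \<Rightarrow> (nat \<Rightarrow> nat \<Rightarrow> nat list \<Rightarrow> nat) \<Rightarrow>
   (nat \<Rightarrow> nat \<Rightarrow> nat list \<Rightarrow> nat) \<Rightarrow> (nat \<Rightarrow> nat \<Rightarrow> nat list \<Rightarrow> nat) \<Rightarrow>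
   nat \<Rightarrow> nat \<Rightarrow> nat \<Rightarrow> nat \<Rightarrow> nat \<Rightarrow> real" where
  "wiring_prob P1 p N ain aout bin bout l a b x y =
     (\<Sum>as\<in>zp_lists p N. \<Sum>bs\<in>zp_lists p N.
        (if aout l x as = a \<and> bout l y bs = b
         then (\<Prod>k<N. P1 (as ! k) (bs ! k) (ain l x (take k as)) (bin l y (take k bs)))
         else 0))"

definition simulates :: "nat \<Rightarrow> box \<Rightarrow> box \<Rightarrow> bool" where
  "simulates p P1 P2 \<longleftrightarrow>
     (\<exists>(N :: nat) (mu :: nat pmf) ain aout bin bout.
        N \<ge> 1 \<and>
        (\<forall>l x as. x < p \<longrightarrow> set as \<subseteq> {0..<p} \<longrightarrow> ain l x as < p \<and> aout l x as < p) \<and>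
        (\<forall>l y bs. y < p \<longrightarrow> set bs \<subseteq> {0..<p} \<longrightarrow> bin l y bs < p \<and> bout l y bs < p) \<and>
        (\<forall>a<p. \<forall>b<p. \<forall>x<p. \<forall>y<p.
            P2 a b x y =
              measure_pmf.expectation mu (\<lambda>l. wiring_prob P1 p N ain aout bin bout l a b x y)))"

definition box_equiv :: "nat \<Rightarrow> box \<Rightarrow> box \<Rightarrow> bool" where
  "box_equiv p P1 P2 \<longleftrightarrow> simulates p P1 P2 \<and> simulates p P2 P1"

end

theory Submission
  imports Defs
begin

text \<open>
  Both boxes in the theorem are instances of a difference box: on inputs x, y the outputs
  a, b are uniform subject to a - b \<equiv> F x y (mod p), where F is integer valued.

  Part (i): if f x y \<equiv> g x + h y, Alice and Bob share a uniform l and output l + g x and l - h y.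

  Take N copies of the difference box
  for F; in the k-th copy Alice inputs \<alpha> k x and Bob inputs \<beta> k y, and each party outputs w
  times the sum of its outputs, for a unit w mod p.  This simulates exactly the difference box
  for w * (\<Sum>k<N. F (\<alpha> k x) (\<beta> k y)): Bob's outputs are forced by Alice's (sum_bob_outputs),
  the sum of Alice's outputs is uniform (sum_zp_lists_sum_list), and multiplication by w permutes
  the residues (sum_affine_reindex).
  PR_p simulates P^f with N = p copies, \<alpha> k x = f x k and \<beta> k y = [k = y].
  Conversely, inseparability of f yields X, Y with c = f X Y - f X 0 - f 0 Y + f 0 0 nonzero mod p;
  with N = p^2 copies indexed by pairs (i, j), inputs X if i < x (else 0) and Y if j < y (else 0),
  the sum is \<equiv> x y c (grid_sum_mod), and w = c^-1 turns P^f into PR_p.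
\<close>

lemma zp_lists_0: "zp_lists p 0 = {[]}"
  unfolding zp_lists_def by auto

lemma zp_lists_Suc:
  "zp_lists p (Suc N) = (\<lambda>(a, as). a # as) ` ({..<p} \<times> zp_lists p N)"
  unfolding zp_lists_def by (auto simp: image_iff length_Suc_conv)

lemma sum_zp_lists_Suc:
  "(\<Sum>as\<in>zp_lists p (Suc N). G as) = (\<Sum>a<p. \<Sum>as\<in>zp_lists p N. G (a # as))"
proof -
  have "inj_on (\<lambda>(a, as). a # as) ({..<p} \<times> zp_lists p N)"
    by (auto simp: inj_on_def)
  then show ?thesis
    unfolding zp_lists_Suc by (simp add: sum.reindex sum.cartesian_product case_prod_unfold)
qed

lemma card_zp_lists: "card (zp_lists p N) = p ^ N"
proof -
  have "zp_lists p N = {xs. set xs \<subseteq> {0..<p} \<and> length xs = N}"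
    unfolding zp_lists_def by auto
  then show ?thesis using card_lists_length_eq[of "{0..<p}" N] by simp
qed

lemma unique_residue:
  assumes "p > 0" and "r < p"
  shows "int r mod int p = z mod int p \<longleftrightarrow> r = nat (z mod int p)"
  using assms by auto

lemma sum_affine_reindex:
  assumes p: "p > 0" and cop: "coprime w (int p)" and per: "\<And>z. G z = G (z mod int p)"
  shows "(\<Sum>r<p. G (w * int r + c)) = (\<Sum>r<p. G (int r))"
proof -
  define \<phi> where "\<phi> r = nat ((w * int r + c) mod int p)" for r
  have "\<phi> ` {..<p} \<subseteq> {..<p}" using p by (auto simp: \<phi>_def nat_less_iff)
  moreover have inj: "inj_on \<phi> {..<p}"
  proof (rule inj_onI)
    fix x y assume "x \<in> {..<p}" "y \<in> {..<p}" and "\<phi> x = \<phi> y"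
    then have "int p dvd w * (int x - int y)"
      using p by (simp add: \<phi>_def nat_eq_iff2 mod_eq_dvd_iff dvd_diff_commute algebra_simps)
    then have "int p dvd int x - int y"
      using cop by (metis coprime_commute coprime_dvd_mult_right_iff)
    with \<open>x \<in> {..<p}\<close> \<open>y \<in> {..<p}\<close> show "x = y"
      by (simp add: mod_eq_dvd_iff[symmetric])
  qed
  ultimately have "\<phi> ` {..<p} = {..<p}" by (intro endo_inj_surj) auto
  then have "(\<Sum>r<p. G (int r)) = (\<Sum>r<p. G (int (\<phi> r)))"
    using sum.reindex[OF inj, of "\<lambda>r. G (int r)"] by simp
  also have "\<dots> = (\<Sum>r<p. G (w * int r + c))"
    using p per by (intro sum.cong) (auto simp: \<phi>_def)
  finally show ?thesis by simp
qed

lemma sum_zp_lists_sum_list: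
  assumes p: "p > 0" and per: "\<And>z. g z = g (z mod int p)"
  shows "(\<Sum>as\<in>zp_lists p (Suc M). g (int (sum_list as))) = real p ^ M * (\<Sum>r<p. g (int r))"
proof -
  have "(\<Sum>as\<in>zp_lists p (Suc M). g (int (sum_list as)))
      = (\<Sum>as\<in>zp_lists p M. \<Sum>a<p. g (1 * int a + int (sum_list as)))"
    unfolding sum_zp_lists_Suc by (subst sum.swap) simp
  also have "\<dots> = (\<Sum>as\<in>zp_lists p M. \<Sum>r<p. g (int r))"
    using sum_affine_reindex[where G=g, OF p coprime_1_left per] by simp
  finally show ?thesis by (simp add: card_zp_lists)
qed

lemma count_common_solution:
  assumes p: "p > 0" and a: "a < p" and b: "b < p"
  shows "(\<Sum>r<p. if (int r + s) mod int p = int a \<and> (int r - E) mod int p = int b then 1 else 0 :: real)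
         = (if (int a - int b) mod int p = (s + E) mod int p then 1 else 0)"
proof -
  define r0 where "r0 = nat ((int a - s) mod int p)"
  have r0: "r0 < p" "int r0 = (int a - s) mod int p"
    using p by (auto simp: r0_def nat_less_iff)
  have "(int r + s) mod int p = int a \<longleftrightarrow> r = r0" if "r < p" for r
  proof -
    have "(int r + s) mod int p = int a \<longleftrightarrow> int r mod int p = (int a - s) mod int p"
      using a mod_eq_dvd_iff[of "int r + s" "int p" "int a"]
      by (simp add: mod_eq_dvd_iff dvd_diff_commute algebra_simps)
    then show ?thesis using unique_residue[OF p that] by (simp add: r0_def)
  qed
  then have "(\<Sum>r<p. if (int r + s) mod int p = int a \<and> (int r - E) mod int p = int b then 1 else 0 :: real)
      = (\<Sum>r<p. if r = r0 then (if (int r0 - E) mod int p = int b then 1 else 0) else 0)"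
    by (intro sum.cong) auto
  also have "\<dots> = (if (int r0 - E) mod int p = int b then 1 else 0)"
    using r0 by (simp add: sum.delta)
  also have "(int r0 - E) mod int p = int b \<longleftrightarrow> (int a - int b) mod int p = (s + E) mod int p"
  proof -
    have "(int r0 - E) mod int p = (int a - s - E) mod int p"
      using r0 by (simp add: mod_diff_left_eq)
    then have "(int r0 - E) mod int p = int b \<longleftrightarrow> (int a - s - E) mod int p = int b mod int p"
      using b by simp
    then show ?thesis
      by (simp add: mod_eq_dvd_iff algebra_simps)
  qed
  finally show ?thesis .
qed

lemma count_scaled_solution:
  assumes p: "p > 0" and cop: "coprime w (int p)" and a: "a < p" and b: "b < p"
  shows "(\<Sum>r<p. if w * int r mod int p = int a \<and> w * (int r - D) mod int p = int b then 1 else 0 :: real)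
         = (if (int a - int b) mod int p = w * D mod int p then 1 else 0)"
proof -
  have "(\<Sum>r<p. if w * int r mod int p = int a \<and> w * (int r - D) mod int p = int b then 1 else 0 :: real)
      = (\<Sum>r<p. (\<lambda>z. if z mod int p = int a \<and> (z - w * D) mod int p = int b then 1 else 0 :: real)
                  (w * int r + 0))"
    by (simp add: right_diff_distrib)
  also have "\<dots> = (\<Sum>r<p. if (int r + 0) mod int p = int a \<and> (int r - w * D) mod int p = int b
                          then 1 else 0 :: real)"
    by (subst sum_affine_reindex[OF p cop]) (simp_all add: mod_diff_left_eq)
  also have "\<dots> = (if (int a - int b) mod int p = (0 + w * D) mod int p then 1 else 0)"
    by (rule count_common_solution[OF p a b])
  finally show ?thesis by simp
qed

section \<open>Difference boxes\<close>

definition diff_box :: "nat \<Rightarrow> (nat \<Rightarrow> nat \<Rightarrow> int) \<Rightarrow> box" where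
  "diff_box p F a b x y = (if (int a - int b) mod int p = F x y mod int p then 1 / real p else 0)"

lemma PR_eq_diff_box: "PR p = diff_box p (\<lambda>x y. int x * int y)"
  by (intro ext) (simp add: PR_box_def diff_box_def)

lemma functional_box_eq_diff_box: "functional_box p f = diff_box p (\<lambda>x y. int (f x y))"
  by (intro ext) (simp add: functional_box_def diff_box_def)

text \<open>Averaging a p-periodic function of Bob's output against a difference box: Bob's output is
  forced to be a - F u v.\<close>

lemma sum_diff_box:
  assumes p: "p > 0" and per: "\<And>z. K z = K (z mod int p)"
  shows "(\<Sum>b<p. diff_box p F a b u v * K (int b)) = K (int a - F u v) / real p"
proof -
  define b0 where "b0 = nat ((int a - F u v) mod int p)"
  have b0: "b0 < p" "int b0 = (int a - F u v) mod int p"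
    using p by (auto simp: b0_def nat_less_iff)
  have "(int a - int b) mod int p = F u v mod int p \<longleftrightarrow> b = b0" if "b < p" for b
  proof -
    have "(int a - int b) mod int p = F u v mod int p \<longleftrightarrow>
          int b mod int p = (int a - F u v) mod int p"
      by (simp add: mod_eq_dvd_iff dvd_diff_commute algebra_simps)
    then show ?thesis using unique_residue[OF p that] by (simp add: b0_def)
  qed
  then have "(\<Sum>b<p. diff_box p F a b u v * K (int b)) = (\<Sum>b<p. if b = b0 then K (int b) / real p else 0)"
    by (intro sum.cong) (auto simp: diff_box_def)
  also have "\<dots> = K (int a - F u v) / real p"
    using b0 per[of "int a - F u v"] by (simp add: sum.delta)
  finally show ?thesis .
qed

section \<open>Linear wirings of difference boxes\<close>

text \<open>Given Alice's outputs as of N copies, Bob's outputs are forced (each b_k \<equiv> a_k - d_k), so a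
  p-periodic function of their sum averages to its value at sum as - \<Sum> d_k, weighted p^-N.\<close>

lemma sum_bob_outputs:
  assumes p: "p > 0" and "length as = N" and "\<And>z. h z = h (z mod int p)"
  shows "(\<Sum>bs\<in>zp_lists p N. h (int (sum_list bs)) * (\<Prod>k<N. diff_box p F (as ! k) (bs ! k) (u k) (v k)))
         = h (int (sum_list as) - (\<Sum>k<N. F (u k) (v k))) / real p ^ N"
  using assms(2,3)
proof (induction N arbitrary: as u v h)
  case 0
  then show ?case by (simp add: zp_lists_0)
next
  case (Suc N)
  then obtain a as' where as: "as = a # as'" and len: "length as' = N"
    by (auto simp: length_Suc_conv)
  define D where "D = (\<Sum>k<N. F (u (Suc k)) (v (Suc k)))"
  define K where "K z = h (z + int (sum_list as') - D) / real p ^ N" for z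
  have per_K: "K z = K (z mod int p)" for z
    unfolding K_def by (metis Suc.prems(2) mod_add_left_eq mod_diff_left_eq)
  have inner: "(\<Sum>bs\<in>zp_lists p N. h (int b + int (sum_list bs)) *
                  (\<Prod>k<N. diff_box p F (as' ! k) (bs ! k) (u (Suc k)) (v (Suc k)))) = K (int b)" for b
  proof -
    have "\<And>z. h (int b + z) = h (int b + z mod int p)"
      by (metis Suc.prems(2) mod_add_right_eq)
    then show ?thesis
      using Suc.IH[OF len, where u="\<lambda>k. u (Suc k)" and v="\<lambda>k. v (Suc k)" and h="\<lambda>z. h (int b + z)"]
      by (simp add: K_def D_def algebra_simps)
  qed
  have "(\<Sum>bs\<in>zp_lists p (Suc N). h (int (sum_list bs)) *
          (\<Prod>k<Suc N. diff_box p F (as ! k) (bs ! k) (u k) (v k)))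
      = (\<Sum>b<p. diff_box p F a b (u 0) (v 0) * (\<Sum>bs\<in>zp_lists p N. h (int b + int (sum_list bs)) *
          (\<Prod>k<N. diff_box p F (as' ! k) (bs ! k) (u (Suc k)) (v (Suc k)))))"
    unfolding sum_zp_lists_Suc prod.lessThan_Suc_shift as
    by (simp add: sum_distrib_left algebra_simps)
  also have "\<dots> = (\<Sum>b<p. diff_box p F a b (u 0) (v 0) * K (int b))"
    by (simp add: inner)
  also have "\<dots> = K (int a - F (u 0) (v 0)) / real p"
    by (rule sum_diff_box[where K=K, OF p per_K])
  also have "\<dots> = h (int (sum_list as) - (\<Sum>k<Suc N. F (u k) (v k))) / real p ^ Suc N"
    unfolding K_def D_def as sum.lessThan_Suc_shift by (simp add: algebra_simps)
  finally show ?case .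
qed

lemma wiring_prob_linear_sum:
  fixes F :: "nat \<Rightarrow> nat \<Rightarrow> int" and \<alpha> \<beta> :: "nat \<Rightarrow> nat \<Rightarrow> nat" and N x y :: nat
  assumes p: "p > 0"
  defines "D \<equiv> (\<Sum>k<N. F (\<alpha> k x) (\<beta> k y))"
  shows "wiring_prob (diff_box p F) p N
           (\<lambda>l x as. \<alpha> (length as) x) (\<lambda>l x as. nat (w * int (sum_list as) mod int p))
           (\<lambda>l y bs. \<beta> (length bs) y) (\<lambda>l y bs. nat (w * int (sum_list bs) mod int p)) l a b x y
       = (\<Sum>as\<in>zp_lists p N. if w * int (sum_list as) mod int p = int a
                                 \<and> w * (int (sum_list as) - D) mod int p = int b then 1 else 0) / real p ^ N"
proof -
  define hA where "hA z = (if w * z mod int p = int a then 1 else 0 :: real)" for z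
  define hB where "hB z = (if w * z mod int p = int b then 1 else 0 :: real)" for z
  have per_hB: "hB z = hB (z mod int p)" for z
    unfolding hB_def by (simp add: mod_mult_right_eq)
  have out_a: "nat (w * int (sum_list as) mod int p) = a \<longleftrightarrow> hA (int (sum_list as)) = 1" for as
    using p by (auto simp: hA_def)
  have out_b: "nat (w * int (sum_list bs) mod int p) = b \<longleftrightarrow> hB (int (sum_list bs)) = 1" for bs
    using p by (auto simp: hB_def)
  have "wiring_prob (diff_box p F) p N
           (\<lambda>l x as. \<alpha> (length as) x) (\<lambda>l x as. nat (w * int (sum_list as) mod int p))
           (\<lambda>l y bs. \<beta> (length bs) y) (\<lambda>l y bs. nat (w * int (sum_list bs) mod int p)) l a b x y
      = (\<Sum>as\<in>zp_lists p N. hA (int (sum_list as)) * (\<Sum>bs\<in>zp_lists p N. hB (int (sum_list bs)) *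
           (\<Prod>k<N. diff_box p F (as ! k) (bs ! k) (\<alpha> k x) (\<beta> k y))))"
    unfolding wiring_prob_def sum_distrib_left
  proof (intro sum.cong refl)
    fix as bs assume "as \<in> zp_lists p N" "bs \<in> zp_lists p N"
    then have "(\<Prod>k<N. diff_box p F (as ! k) (bs ! k) (\<alpha> (length (take k as)) x) (\<beta> (length (take k bs)) y))
             = (\<Prod>k<N. diff_box p F (as ! k) (bs ! k) (\<alpha> k x) (\<beta> k y))"
      by (intro prod.cong) (auto simp: zp_lists_def)
    then show "(if nat (w * int (sum_list as) mod int p) = a \<and> nat (w * int (sum_list bs) mod int p) = b
        then \<Prod>k<N. diff_box p F (as ! k) (bs ! k) (\<alpha> (length (take k as)) x) (\<beta> (length (take k bs)) y)
        else 0) = hA (int (sum_list as)) * (hB (int (sum_list bs)) *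
          (\<Prod>k<N. diff_box p F (as ! k) (bs ! k) (\<alpha> k x) (\<beta> k y)))"
      unfolding out_a out_b by (simp add: hA_def hB_def)
  qed
  also have "\<dots> = (\<Sum>as\<in>zp_lists p N. hA (int (sum_list as)) * hB (int (sum_list as) - D)) / real p ^ N"
    unfolding sum_divide_distrib
  proof (intro sum.cong refl)
    fix as assume "as \<in> zp_lists p N"
    then have "length as = N" by (simp add: zp_lists_def)
    then show "hA (int (sum_list as)) * (\<Sum>bs\<in>zp_lists p N. hB (int (sum_list bs)) *
           (\<Prod>k<N. diff_box p F (as ! k) (bs ! k) (\<alpha> k x) (\<beta> k y)))
        = hA (int (sum_list as)) * hB (int (sum_list as) - D) / real p ^ N"
      unfolding D_def by (simp add: sum_bob_outputs[where h=hB, OF p _ per_hB])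
  qed
  also have "\<dots> = (\<Sum>as\<in>zp_lists p N. if w * int (sum_list as) mod int p = int a
                                 \<and> w * (int (sum_list as) - D) mod int p = int b then 1 else 0) / real p ^ N"
    unfolding hA_def hB_def by (intro arg_cong[where f="\<lambda>s. s / real p ^ N"] sum.cong) auto
  finally show ?thesis .
qed

lemma wiring_prob_linear:
  assumes p: "p > 0" and cop: "coprime w (int p)" and a: "a < p" and b: "b < p"
  shows "wiring_prob (diff_box p F) p (Suc M)
           (\<lambda>l x as. \<alpha> (length as) x) (\<lambda>l x as. nat (w * int (sum_list as) mod int p))
           (\<lambda>l y bs. \<beta> (length bs) y) (\<lambda>l y bs. nat (w * int (sum_list bs) mod int p)) l a b x y
         = diff_box p (\<lambda>x y. w * (\<Sum>k<Suc M. F (\<alpha> k x) (\<beta> k y))) a b x y"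
proof -
  define D where "D = (\<Sum>k<Suc M. F (\<alpha> k x) (\<beta> k y))"
  define g where "g z = (if w * z mod int p = int a \<and> w * (z - D) mod int p = int b then 1 else 0 :: real)"
    for z
  have per_g: "g z = g (z mod int p)" for z
    unfolding g_def by (metis mod_mult_right_eq mod_diff_left_eq)
  have "wiring_prob (diff_box p F) p (Suc M)
           (\<lambda>l x as. \<alpha> (length as) x) (\<lambda>l x as. nat (w * int (sum_list as) mod int p))
           (\<lambda>l y bs. \<beta> (length bs) y) (\<lambda>l y bs. nat (w * int (sum_list bs) mod int p)) l a b x y
      = (\<Sum>as\<in>zp_lists p (Suc M). g (int (sum_list as))) / real p ^ Suc M"
    unfolding wiring_prob_linear_sum[OF p] g_def D_def ..
  also have "\<dots> = real p ^ M * (\<Sum>r<p. g (int r)) / real p ^ Suc M"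
    by (simp add: sum_zp_lists_sum_list[where g=g, OF p per_g])
  also have "\<dots> = (if (int a - int b) mod int p = w * D mod int p then 1 else 0) / real p"
    using p unfolding g_def count_scaled_solution[OF p cop a b] by simp
  finally show ?thesis by (simp add: diff_box_def D_def)
qed

text \<open>The wiring is deterministic, so the shared randomness is trivial.\<close>

lemma simulates_diff_box:
  fixes N :: nat and w :: int and \<alpha> \<beta> :: "nat \<Rightarrow> nat \<Rightarrow> nat"
  assumes p: "p > 0" and N: "N \<ge> 1" and cop: "coprime w (int p)"
    and \<alpha>: "\<And>k x. x < p \<Longrightarrow> \<alpha> k x < p" and \<beta>: "\<And>k y. y < p \<Longrightarrow> \<beta> k y < p"
    and E: "\<And>x y. x < p \<Longrightarrow> y < p \<Longrightarrow>
              E x y mod int p = w * (\<Sum>k<N. F (\<alpha> k x) (\<beta> k y)) mod int p"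
  shows "simulates p (diff_box p F) (diff_box p E)"
  unfolding simulates_def
proof (intro exI conjI allI impI)
  obtain M where M: "N = Suc M" using N by (cases N) auto
  fix a b x y assume "a < p" "b < p" "x < p" "y < p"
  then show "diff_box p E a b x y = measure_pmf.expectation (return_pmf 0)
      (\<lambda>l. wiring_prob (diff_box p F) p N
             (\<lambda>l x as. \<alpha> (length as) x) (\<lambda>l x as. nat (w * int (sum_list as) mod int p))
             (\<lambda>l y bs. \<beta> (length bs) y) (\<lambda>l y bs. nat (w * int (sum_list bs) mod int p)) l a b x y)"
    unfolding M expectation_return_pmf wiring_prob_linear[OF p cop \<open>a < p\<close> \<open>b < p\<close>]
    using E by (simp add: diff_box_def M)
qed (use N p \<alpha> \<beta> in \<open>auto simp: nat_less_iff\<close>)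

section \<open>Separable functions give local boxes\<close>

lemma prob_uniform_lessThan:
  assumes "p > 0"
  shows "measure_pmf.prob (pmf_of_set {..<p}) S = (\<Sum>l<p. if l \<in> S then 1 else 0) / real p"
  using assms sum_of_bool_eq[where 'a=real, of "{..<p}" "\<lambda>l. l \<in> S", unfolded of_bool_def]
  by (subst measure_pmf_of_set) (auto simp: Int_def)

lemma separable_imp_local:
  assumes p: "p > 0" and "add_separable p f"
  shows "local_box p (functional_box p f)"
proof -
  obtain g h :: "nat \<Rightarrow> nat" where gh:
    "\<And>x y. x < p \<Longrightarrow> y < p \<Longrightarrow> int (f x y) mod int p = (int (g x) + int (h y)) mod int p"
    using assms(2) unfolding add_separable_def by blast
  define A where "A l x = nat ((int l + int (g x)) mod int p)" for l x
  define B where "B l y = nat ((int l - int (h y)) mod int p)" for l y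
  have "functional_box p f a b x y = measure_pmf.prob (pmf_of_set {..<p}) {l. A l x = a \<and> B l y = b}"
    if "a < p" "b < p" "x < p" "y < p" for a b x y
  proof -
    have "A l x = a \<and> B l y = b \<longleftrightarrow>
          (int l + int (g x)) mod int p = int a \<and> (int l - int (h y)) mod int p = int b" for l
      using p by (auto simp: A_def B_def)
    then have "measure_pmf.prob (pmf_of_set {..<p}) {l. A l x = a \<and> B l y = b}
        = (if (int a - int b) mod int p = (int (g x) + int (h y)) mod int p then 1 else 0) / real p"
      using count_common_solution[OF p that(1,2)] by (simp add: prob_uniform_lessThan[OF p])
    then show ?thesis
      using gh[OF that(3,4)] by (simp add: functional_box_def)
  qed
  moreover have "A l x < p" "B l y < p" for l x y
    using p by (simp_all add: A_def B_def nat_less_iff)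
  ultimately show ?thesis
    unfolding local_box_def by (intro exI[of _ "pmf_of_set {..<p}"] exI[of _ A] exI[of _ B]) auto
qed

section \<open>PR_p simulates every functional box\<close>

lemma PR_simulates_functional:
  assumes p: "p \<ge> 2"
  shows "simulates p (PR p) (functional_box p f)"
  unfolding PR_eq_diff_box functional_box_eq_diff_box
proof (rule simulates_diff_box[where N=p and w=1 and \<alpha>="\<lambda>k x. f x k mod p"
                                 and \<beta>="\<lambda>k y. if y = k then 1 else 0"])
  fix x y assume "x < p" "y < p"
  then have "(\<Sum>k<p. int (f x k mod p) * int (if y = k then 1 else 0))
      = (\<Sum>k<p. if k = y then int (f x y mod p) else 0)"
    by (intro sum.cong) auto
  with \<open>y < p\<close> have "(\<Sum>k<p. int (f x k mod p) * int (if y = k then 1 else 0)) = int (f x y mod p)"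
    by simp
  then show "int (f x y) mod int p
      = 1 * (\<Sum>k<p. int (f x k mod p) * int (if y = k then 1 else 0)) mod int p"
    by (simp add: zmod_int)
qed (use p in auto)

section \<open>Inseparable functional boxes simulate PR_p\<close>

lemma mod_inverse_int:
  fixes c n :: int
  assumes "coprime c n"
  obtains m where "m * c mod n = 1 mod n" and "coprime m n"
proof -
  have "gcd n c = 1"
    using assms by (metis coprime_iff_gcd_eq_1 gcd.commute)
  then obtain u m where bez: "u * n + m * c = 1"
    using bezout_int[of n c] by auto
  then have "m * c mod n = 1 mod n"
    by (simp flip: bez)
  moreover have "coprime m n"
  proof (rule coprimeI)
    fix e assume "e dvd m" "e dvd n"
    then have "e dvd u * n + m * c" by simp
    then show "is_unit e" using bez by simp
  qed
  ultimately show ?thesis by (rule that)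
qed

text \<open>If f is inseparable, some second difference f X Y - f X 0 - f 0 Y + f 0 0 is nonzero mod p;
  otherwise f x y \<equiv> (f x 0 + (p - 1) f 0 0) + f 0 y would be a separation.\<close>

lemma inseparable_witness:
  assumes p: "p > 0" and "\<not> add_separable p f"
  shows "\<exists>X<p. \<exists>Y<p. \<not> int p dvd int (f X Y) - int (f X 0) - int (f 0 Y) + int (f 0 0)"
proof (rule ccontr)
  assume "\<not> ?thesis"
  then have vanish: "int p dvd int (f x y) - int (f x 0) - int (f 0 y) + int (f 0 0)"
    if "x < p" "y < p" for x y
    using that by blast
  have "int (f x y) mod int p = (int (f x 0 + (p - 1) * f 0 0) + int (f 0 y)) mod int p"
    if "x < p" "y < p" for x y
  proof -
    have "int (p - 1) = int p - 1" using p by simp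
    then have eq: "int (f x y) - (int (f x 0 + (p - 1) * f 0 0) + int (f 0 y))
        = (int (f x y) - int (f x 0) - int (f 0 y) + int (f 0 0)) - int p * int (f 0 0)"
      by (simp only: of_nat_add of_nat_mult) (simp add: algebra_simps)
    have "int p dvd (int (f x y) - int (f x 0) - int (f 0 y) + int (f 0 0)) - int p * int (f 0 0)"
      using vanish[OF that] by (intro dvd_diff) simp_all
    then have "int p dvd int (f x y) - (int (f x 0 + (p - 1) * f 0 0) + int (f 0 y))"
      unfolding eq .
    then show ?thesis by (simp add: mod_eq_dvd_iff)
  qed
  then have "add_separable p f"
    unfolding add_separable_def
    by (intro exI[of _ "\<lambda>x. f x 0 + (p - 1) * f 0 0"] exI[of _ "\<lambda>y. f 0 y"]) simp
  with assms(2) show False by contradiction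
qed

lemma sum_lessThan_mult:
  fixes p :: nat
  assumes "p > 0"
  shows "(\<Sum>k<n * p. G (k div p) (k mod p)) = (\<Sum>i<n. \<Sum>j<p. G i j)"
proof -
  have "(\<Sum>k\<in>{i * p..<i * p + p}. G (k div p) (k mod p)) = (\<Sum>j<p. G i j)" for i
  proof -
    have "(\<Sum>k\<in>{i * p..<i * p + p}. G (k div p) (k mod p))
        = (\<Sum>j\<in>{0..<p}. G ((j + i * p) div p) ((j + i * p) mod p))"
      using sum.shift_bounds_nat_ivl[of "\<lambda>k. G (k div p) (k mod p)" 0 "i * p" p]
      by (simp add: add.commute)
    also have "\<dots> = (\<Sum>j<p. G i j)"
      using assms by (intro sum.cong) auto
    finally show ?thesis .
  qed
  then show ?thesis using sum.nat_group[of "\<lambda>k. G (k div p) (k mod p)" p n] by simp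
qed

lemma sum_threshold:
  fixes A B :: "'a :: comm_ring_1"
  assumes "x \<le> p"
  shows "(\<Sum>i<p. if i < x then A else B) = of_nat x * A + of_nat (p - x) * B"
proof -
  have "{..<p} = {..<x} \<union> {x..<p}" using assms by auto
  then have "(\<Sum>i<p. if i < x then A else B)
      = (\<Sum>i<x. if i < x then A else B) + (\<Sum>i\<in>{x..<p}. if i < x then A else B)"
    by (simp add: sum.union_disjoint ivl_disj_int)
  then show ?thesis by simp
qed

lemma grid_sum_mod:
  fixes F :: "nat \<Rightarrow> nat \<Rightarrow> int"
  assumes x: "x \<le> p" and y: "y \<le> p"
  shows "(\<Sum>i<p. \<Sum>j<p. F (if i < x then X else 0) (if j < y then Y else 0)) mod int p
       = int x * int y * (F X Y - F X 0 - F 0 Y + F 0 0) mod int p"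
proof -
  define R where "R u = (\<Sum>j<p. F u (if j < y then Y else 0))" for u
  have row: "R u = int y * F u Y + int (p - y) * F u 0" for u
  proof -
    have "R u = (\<Sum>j<p. if j < y then F u Y else F u 0)"
      unfolding R_def by (intro sum.cong) auto
    then show ?thesis by (simp only: sum_threshold[OF y])
  qed
  have "(\<Sum>i<p. \<Sum>j<p. F (if i < x then X else 0) (if j < y then Y else 0))
      = (\<Sum>i<p. if i < x then R X else R 0)"
    unfolding R_def by (intro sum.cong) auto
  also have "\<dots> = int x * R X + int (p - x) * R 0"
    by (rule sum_threshold[OF x])
  also have "\<dots> = int x * int y * (F X Y - F X 0 - F 0 Y + F 0 0)
                  + int p * (int x * F X 0 + int y * F 0 Y + (int p - int x - int y) * F 0 0)"
  proof -
    have "int (p - x) = int p - int x" "int (p - y) = int p - int y"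
      using x y by simp_all
    then show ?thesis unfolding row by (simp add: algebra_simps)
  qed
  finally show ?thesis by (simp only: mod_mult_self2)
qed

lemma functional_simulates_PR:
  assumes pr: "prime p" and insep: "\<not> add_separable p f"
  shows "simulates p (functional_box p f) (PR p)"
proof -
  have p: "p > 0" using pr by (simp add: prime_gt_0_nat)
  obtain X Y where X: "X < p" and Y: "Y < p"
    and nd: "\<not> int p dvd int (f X Y) - int (f X 0) - int (f 0 Y) + int (f 0 0)"
    using inseparable_witness[OF p insep] by blast
  define c where "c = int (f X Y) - int (f X 0) - int (f 0 Y) + int (f 0 0)"
  have "coprime c (int p)"
    using prime_imp_coprime[of "int p" c] pr nd by (simp add: c_def coprime_commute)
  then obtain m where m: "m * c mod int p = 1 mod int p" and cop: "coprime m (int p)"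
    by (rule mod_inverse_int)
  define \<alpha> where "\<alpha> k x = (if k div p < x then X else 0)" for k x :: nat
  define \<beta> where "\<beta> k y = (if k mod p < y then Y else 0)" for k y :: nat
  show ?thesis
    unfolding PR_eq_diff_box functional_box_eq_diff_box
  proof (rule simulates_diff_box[where N="p * p" and w=m and \<alpha>=\<alpha> and \<beta>=\<beta>])
    fix x y assume "x < p" "y < p"
    have "(\<Sum>k<p * p. int (f (\<alpha> k x) (\<beta> k y)))
        = (\<Sum>i<p. \<Sum>j<p. int (f (if i < x then X else 0) (if j < y then Y else 0)))"
      unfolding \<alpha>_def \<beta>_def by (rule sum_lessThan_mult[OF p])
    then have "(\<Sum>k<p * p. int (f (\<alpha> k x) (\<beta> k y))) mod int p = int x * int y * c mod int p"
      using grid_sum_mod[of x p y "\<lambda>u v. int (f u v)" X Y] \<open>x < p\<close> \<open>y < p\<close>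
      by (simp add: c_def)
    then have "m * (\<Sum>k<p * p. int (f (\<alpha> k x) (\<beta> k y))) mod int p = int x * int y * (m * c) mod int p"
      by (metis mod_mult_right_eq mult.left_commute)
    also have "\<dots> = int x * int y mod int p"
      using m by (metis mod_mult_right_eq mult.right_neutral)
    finally show "int x * int y mod int p = m * (\<Sum>k<p * p. int (f (\<alpha> k x) (\<beta> k y))) mod int p"
      by simp
  qed (use p cop X Y in \<open>auto simp: \<alpha>_def \<beta>_def\<close>)
qed

theorem lemma1:
  fixes p :: nat and f :: "nat \<Rightarrow> nat \<Rightarrow> nat"
  assumes "prime p"
    and "\<forall>x<p. \<forall>y<p. f x y < p"
  shows "(add_separable p f \<longrightarrow> local_box p (functional_box p f)) \<and>
         (\<not> add_separable p f \<longrightarrow>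
            simulates p (functional_box p f) (PR p) \<and> simulates p (PR p) (functional_box p f))"
proof -
  have "p \<ge> 2" using assms(1) by (rule prime_ge_2_nat)
  then show ?thesis
    using separable_imp_local[of p f] PR_simulates_functional[of p f]
          functional_simulates_PR[OF assms(1), of f] by auto
qed

end
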